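(* Under the hypotheses of Lemma C2 (Pauli-spanned Cartan decomposition $\mathfrak g=\mathfrak k\oplus\mathfrak m$; pairwise commuting Pauli strings $b_1,\dots,b_d\in\tilde{\mathfrak m}$ in one connected component of the frustration graph of $\mathfrak g$; $2\le r\le d$ with $\tilde{\mathfrak k}^{r-1}_{1\dots r-2}$ non-empty), if in addition $\tilde{\mathfrak k}^r_{1\dots r-2}$ is non-empty, then $|\tilde{\mathfrak k}^{r-1}_{1\dots r-2}|=|\tilde{\mathfrak k}^r_{1\dots r-2}|$; equivalently, $|\tilde{\mathfrak k}^{r-1}_{1\dots r-2,r}|=|\tilde{\mathfrak k}^r_{1\dots r-1}|$.
   Context: Pauli strings on $n$ qubits are tensor products of $I,X,Y,Z$, not all identity; two Pauli strings either commute or anticommute. A Pauli-spanned Cartan decomposition is $\mathfrak g=\mathfrak k\oplus\mathfrak m\subseteq\mathfrak{su}(2^n)$ with $\mathfrak k=\mathrm{span}_{i\mathbb R}\tilde{\mathfrak k}$, $\mathfrak m=\mathrm{span}_{i\mathbb R}\tilde{\mathfrak m}$, $\mathfrak g=\mathrm{span}_{i\mathbb R}\tilde{\mathfrak g}$ with $\tilde{\mathfrak g}=\tilde{\mathfrak k}\sqcup\tilde{\mathfrak m}$ the set of all Pauli strings (up to phase) $\sigma$ with $i\sigma\in\mathfrak g$, and $[\mathfrak k,\mathfrak k]\subseteq\mathfrak k$, $[\mathfrak m,\mathfrak m]\subseteq\mathfrak k$, $[\mathfrak k,\mathfrak m]\subseteq\mathfrak m$. The frustration graph of $\mathfrak g$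 has vertex set $\tilde{\mathfrak g}$, with edges between anticommuting pairs. For disjoint index lists, $\tilde{\mathfrak k}^{i_1i_2\dots}_{j_1j_2\dots}$ is the set of $k\in\tilde{\mathfrak k}$ anticommuting with every $b_{i_p}$ and commuting with every $b_{j_q}$ (no condition on other indices). *)

theory Defs
  imports Main
begin

text \<open>Single-qubit Paulis, modulo phase.\<close>
datatype pauli = PI | PX | PY | PZ

fun pmul1 :: "pauli \<Rightarrow> pauli \<Rightarrow> pauli" where
  "pmul1 PI q = q"
| "pmul1 p PI = p"
| "pmul1 PX PX = PI" | "pmul1 PY PY = PI" | "pmul1 PZ PZ = PI"
| "pmul1 PX PY = PZ" | "pmul1 PY PX = PZ"
| "pmul1 PY PZ = PX" | "pmul1 PZ PY = PX"
| "pmul1 PZ PX = PY" | "pmul1 PX PZ = PY"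

type_synonym pstring = "nat \<Rightarrow> pauli"

definition pauli_strings :: "nat \<Rightarrow> pstring set" where
  "pauli_strings n = {s. (\<forall>j. n \<le> j \<longrightarrow> s j = PI) \<and> (\<exists>j<n. s j \<noteq> PI)}"

definition pmul :: "pstring \<Rightarrow> pstring \<Rightarrow> pstring" where
  "pmul s t = (\<lambda>j. pmul1 (s j) (t j))"

definition anticomm :: "nat \<Rightarrow> pstring \<Rightarrow> pstring \<Rightarrow> bool" where
  "anticomm n s t = odd (card {j\<in>{0..<n}. s j \<noteq> PI \<and> t j \<noteq> PI \<and> s j \<noteq> t j})"

text \<open>Pauli-spanned Cartan decomposition g = k + m given by the Pauli sets K (=k~) and M (=m~).
  Since distinct Pauli strings are linearly independent and [i s, i t] is 0 if s,t commute and
  a nonzero multiple of i (s t) otherwise, the bracket conditions on the spans are exactly the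
  following closure conditions on the generating Pauli sets.\<close>
definition pauli_cartan :: "nat \<Rightarrow> pstring set \<Rightarrow> pstring set \<Rightarrow> bool" where
  "pauli_cartan n K M \<longleftrightarrow>
     K \<subseteq> pauli_strings n \<and> M \<subseteq> pauli_strings n \<and> K \<inter> M = {} \<and>
     (\<forall>a\<in>K. \<forall>c\<in>K. anticomm n a c \<longrightarrow> pmul a c \<in> K) \<and>
     (\<forall>a\<in>M. \<forall>c\<in>M. anticomm n a c \<longrightarrow> pmul a c \<in> K) \<and>
     (\<forall>a\<in>K. \<forall>c\<in>M. anticomm n a c \<longrightarrow> pmul a c \<in> M)"

definition frustration_edges :: "nat \<Rightarrow> pstring set \<Rightarrow> (pstring \<times> pstring) set" where
  "frustration_edges n G = {(x, y). x \<in> G \<and> y \<in> G \<and> anticomm n x y}"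

text \<open>k~^{A}_{C}: elements of K anticommuting with all b_i (i in A) and commuting with all b_j (j in C).\<close>
definition ksub :: "nat \<Rightarrow> pstring set \<Rightarrow> (nat \<Rightarrow> pstring) \<Rightarrow> nat set \<Rightarrow> nat set \<Rightarrow> pstring set" where
  "ksub n K b A C = {k\<in>K. (\<forall>i\<in>A. anticomm n k (b i)) \<and> (\<forall>j\<in>C. \<not> anticomm n k (b j))}"

end

theory Submission imports Defs begin

(* In a set of Pauli strings closed under products of anticommuting pairs, two strings a, c
   of one component of the frustration graph, a not isolated, have a common neighbour.  If
   a and c commute with some b of the set and are not isolated in its centralizer, such a
   common neighbour can be found inside the centralizer.  Applied to b_1, ..., b_(r-2) and
   the Cartan decomposition this yields q in k^{r-1,r}_{1..r-2}; multiplication by q, or by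
   b_(r-1) q b_r, then matches k^{r-1}_{1..r-2,r} with k^r_{1..r-1}, and adding the common
   part k^{r-1,r}_{1..r-2} to both sides gives the first equality. *)

definition anticomm1 :: "pauli \<Rightarrow> pauli \<Rightarrow> bool" where
  "anticomm1 p q \<longleftrightarrow> p \<noteq> PI \<and> q \<noteq> PI \<and> p \<noteq> q"

lemma anticomm1_pmul1: "anticomm1 (pmul1 p q) u \<longleftrightarrow> anticomm1 p u \<noteq> anticomm1 q u"
  by (cases p; cases q; cases u) (simp_all add: anticomm1_def)

lemma odd_card_filter_xor:
  "odd (card {j\<in>{0..<n::nat}. P j \<noteq> Q j})
     \<longleftrightarrow> odd (card {j\<in>{0..<n}. P j}) \<noteq> odd (card {j\<in>{0..<n}. Q j})"
proof (induction n)
  case 0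
  then show ?case by simp
next
  case (Suc n)
  have split: "{j\<in>{0..<Suc n}. R j} =
      (if R n then insert n {j\<in>{0..<n}. R j} else {j\<in>{0..<n}. R j})" for R
    by (auto simp: less_Suc_eq)
  show ?case
    unfolding split[of "\<lambda>j. P j \<noteq> Q j"] split[of P] split[of Q] using Suc.IH by auto
qed

lemma anticomm_iff_anticomm1: "anticomm n s t \<longleftrightarrow> odd (card {j\<in>{0..<n}. anticomm1 (s j) (t j)})"
  by (simp add: anticomm_def anticomm1_def)

lemma anticomm_sym: "anticomm n s t \<longleftrightarrow> anticomm n t s"
proof -
  have "anticomm1 p q \<longleftrightarrow> anticomm1 q p" for p q by (auto simp: anticomm1_def)
  then show ?thesis by (simp add: anticomm_iff_anticomm1)
qed

lemma anticomm_irrefl [simp]: "\<not> anticomm n s s"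
  by (simp add: anticomm_def)

lemma anticomm_pmul_left: "anticomm n (pmul s t) u \<longleftrightarrow> anticomm n s u \<noteq> anticomm n t u"
  unfolding anticomm_iff_anticomm1 pmul_def anticomm1_pmul1 by (rule odd_card_filter_xor)

lemma anticomm_pmul_right: "anticomm n u (pmul s t) \<longleftrightarrow> anticomm n u s \<noteq> anticomm n u t"
  using anticomm_pmul_left anticomm_sym by metis

lemmas anticomm_pmul = anticomm_pmul_left anticomm_pmul_right

lemma pmul_commute: "pmul s t = pmul t s"
  unfolding pmul_def by (rule ext, case_tac "s j"; case_tac "t j") simp_all

lemma pmul_pmul_cancel: "pmul (pmul s t) t = s"
proof -
  have "pmul1 (pmul1 p q) q = p" for p q by (cases p; cases q) simp_all
  then show ?thesis by (simp add: pmul_def)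
qed

lemma finite_UNIV_pauli: "finite (UNIV :: pauli set)"
proof -
  have "(UNIV :: pauli set) = {PI, PX, PY, PZ}"
    using pauli.exhaust by blast
  then show ?thesis by (metis finite.emptyI finite_insert)
qed

lemma finite_pauli_strings: "finite (pauli_strings n)"
proof (rule finite_subset)
  show "pauli_strings n \<subseteq> {f. \<forall>x. (x \<in> {0..<n} \<longrightarrow> f x \<in> UNIV) \<and> (x \<notin> {0..<n} \<longrightarrow> f x = PI)}"
    unfolding pauli_strings_def by auto
  show "finite \<dots>"
    by (intro finite_set_of_finite_funs) (simp_all add: finite_UNIV_pauli)
qed

definition pauli_closed :: "nat \<Rightarrow> pstring set \<Rightarrow> bool" where
  "pauli_closed n G \<longleftrightarrow> (\<forall>x\<in>G. \<forall>y\<in>G. anticomm n x y \<longrightarrow> pmul x y \<in> G)"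

definition centralizer :: "nat \<Rightarrow> pstring set \<Rightarrow> pstring set \<Rightarrow> pstring set" where
  "centralizer n G S = {g\<in>G. \<forall>s\<in>S. \<not> anticomm n g s}"

lemma pauli_closedD: "pauli_closed n G \<Longrightarrow> x \<in> G \<Longrightarrow> y \<in> G \<Longrightarrow> anticomm n x y \<Longrightarrow> pmul x y \<in> G"
  unfolding pauli_closed_def by blast

lemma pauli_closed_centralizer: "pauli_closed n G \<Longrightarrow> pauli_closed n (centralizer n G S)"
  unfolding pauli_closed_def centralizer_def by (auto simp: anticomm_pmul)

lemma centralizer_empty [simp]: "centralizer n G {} = G"
  by (simp add: centralizer_def)

lemma centralizer_insert: "centralizer n G (insert b S) = centralizer n (centralizer n G S) {b}"
  by (auto simp: centralizer_def)

lemma centralizer_antimono: "S \<subseteq> T \<Longrightarrow> centralizer n G T \<subseteq> centralizer n G S"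
  by (auto simp: centralizer_def)

lemma frustration_edge_rtrancl:
  "x \<in> G \<Longrightarrow> y \<in> G \<Longrightarrow> anticomm n x y \<Longrightarrow> (x, y) \<in> (frustration_edges n G)\<^sup>*"
  by (auto simp: frustration_edges_def)

text \<open>Along a walk from \<open>a\<close>, a vertex \<open>z\<close> that is neither \<open>a\<close> nor a neighbour of \<open>a\<close>
  keeps a common neighbour with \<open>a\<close>: if the old one \<open>g\<close> commutes with the next vertex
  \<open>z'\<close>, then \<open>g z\<close> or \<open>z\<close> itself is a common neighbour of \<open>a\<close> and \<open>z'\<close>.\<close>
lemma pauli_closed_common_neighbour:
  assumes closed: "pauli_closed n G" and a: "a \<in> G" and c: "c \<in> G"
    and x: "x \<in> G" "anticomm n a x"
    and walk: "(a, c) \<in> (frustration_edges n G)\<^sup>*"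
  shows "\<exists>g\<in>G. anticomm n g a \<and> anticomm n g c"
proof -
  have "z = a \<or> anticomm n a z \<or> (\<exists>g\<in>G. anticomm n g a \<and> anticomm n g z)"
    if "(a, z) \<in> (frustration_edges n G)\<^sup>*" for z
    using that
  proof (induction rule: rtrancl_induct)
    case base
    then show ?case by simp
  next
    case (step z z')
    then have z: "z \<in> G" "z' \<in> G" "anticomm n z z'" by (auto simp: frustration_edges_def)
    from step.IH consider "z = a" | "anticomm n a z" | g where "g \<in> G" "anticomm n g a" "anticomm n g z"
      by blast
    then show ?case
    proof cases
      case 3
      show ?thesis
      proof (cases "anticomm n g z' \<or> anticomm n a z")
        case True
        then show ?thesis using 3 z anticomm_sym by blast
      next
        case False
        have "pmul g z \<in> G" using pauli_closedD[OF closed \<open>g \<in> G\<close> z(1)] 3 by blast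
        moreover have "anticomm n (pmul g z) a" "anticomm n (pmul g z) z'"
          using 3 z False anticomm_sym by (auto simp: anticomm_pmul)
        ultimately show ?thesis by blast
      qed
    qed (use z anticomm_sym in blast)+
  qed
  with walk consider "c = a" | "anticomm n a c" | "\<exists>g\<in>G. anticomm n g a \<and> anticomm n g c"
    by blast
  then show ?thesis
  proof cases
    case 1
    then show ?thesis using x anticomm_sym by blast
  next
    case 2
    then have "pmul a c \<in> G" by (rule pauli_closedD[OF closed a c])
    moreover have "anticomm n (pmul a c) a" "anticomm n (pmul a c) c"
      using 2 anticomm_sym[of n a c] by (simp_all add: anticomm_pmul)
    ultimately show ?thesis by blast
  qed
qed

text \<open>If \<open>g\<close> anticommutes with \<open>b\<close>, the product \<open>b a c\<close> is reached from \<open>b\<close> inside \<open>G\<close> by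
  multiplying successively with \<open>g\<close>, \<open>a\<close>, \<open>c\<close>, \<open>g\<close>; it commutes with \<open>b\<close> and links the
  neighbours \<open>x\<close> of \<open>a\<close> and \<open>y\<close> of \<open>c\<close>.\<close>
lemma centralizer_connected:
  assumes closed: "pauli_closed n G" and b: "b \<in> G"
    and a: "a \<in> centralizer n G {b}" and c: "c \<in> centralizer n G {b}"
    and x: "x \<in> centralizer n G {b}" "anticomm n a x"
    and y: "y \<in> centralizer n G {b}" "anticomm n c y"
    and g: "g \<in> G" "anticomm n g a" "anticomm n g c"
  shows "(a, c) \<in> (frustration_edges n (centralizer n G {b}))\<^sup>*"
proof -
  let ?C = "centralizer n G {b}"
  have ab: "a \<in> G" "\<not> anticomm n a b" and cb: "c \<in> G" "\<not> anticomm n c b"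
    and xb: "\<not> anticomm n x b" and yb: "\<not> anticomm n y b"
    using a c x y by (auto simp: centralizer_def)
  note edge = frustration_edge_rtrancl[where G = ?C and n = n]
  consider "\<not> anticomm n g b" | "anticomm n a c" | "anticomm n c x" | "anticomm n a y"
    | "anticomm n g b" "\<not> anticomm n a c" "\<not> anticomm n c x" "\<not> anticomm n a y"
    by blast
  then show ?thesis
  proof cases
    case 1
    then have "g \<in> ?C" using g by (simp add: centralizer_def)
    then show ?thesis using edge[OF a] edge[OF _ c] g anticomm_sym by (metis rtrancl_trans)
  next
    case 2
    then show ?thesis by (rule edge[OF a c])
  next
    case 3
    then show ?thesis using edge[OF a x(1)] edge[OF x(1) c] x anticomm_sym by (metis rtrancl_trans)
  next
    case 4
    then show ?thesis using edge[OF a y(1)] edge[OF y(1) c] y anticomm_sym by (metis rtrancl_trans)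
  next
    case 5
    define w where "w = pmul (pmul (pmul (pmul b g) a) c) g"
    have "pmul b g \<in> G"
      using pauli_closedD[OF closed b g(1)] 5 anticomm_sym by blast
    moreover note pauli_closedD[OF closed this ab(1)]
    moreover note pauli_closedD[OF closed this cb(1)]
    moreover note pauli_closedD[OF closed this g(1)]
    ultimately have "w \<in> G"
      unfolding w_def using 5 g ab cb anticomm_sym by (simp add: anticomm_pmul)
    have w_anticomm: "anticomm n w z \<longleftrightarrow> anticomm n b z \<noteq> (anticomm n a z \<noteq> anticomm n c z)" for z
      unfolding w_def by (simp add: anticomm_pmul) blast
    have "w \<in> ?C"
      using \<open>w \<in> G\<close> w_anticomm[of b] ab cb anticomm_sym by (simp add: centralizer_def)
    moreover have "anticomm n x w" "anticomm n w y"
      using w_anticomm[of x] w_anticomm[of y] x y xb yb 5 anticomm_sym by metis+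
    ultimately show ?thesis
      using edge[OF a x(1)] edge[OF x(1)] edge[OF _ y(1)] edge[OF y(1) c] x y anticomm_sym
      by (metis rtrancl_trans)
  qed
qed

lemma centralizer_common_neighbour:
  assumes closed: "pauli_closed n G" and walk: "(a, c) \<in> (frustration_edges n G)\<^sup>*"
  shows "\<lbrakk>finite S; S \<subseteq> G; \<forall>s\<in>S. \<forall>t\<in>S. \<not> anticomm n s t;
      a \<in> centralizer n G S; c \<in> centralizer n G S;
      x \<in> centralizer n G S; anticomm n a x; y \<in> centralizer n G S; anticomm n c y\<rbrakk>
    \<Longrightarrow> \<exists>g\<in>centralizer n G S. anticomm n g a \<and> anticomm n g c"
proof (induction S rule: finite_induct)
  case empty
  then show ?case using pauli_closed_common_neighbour[OF closed _ _ _ _ walk] by simp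
next
  case (insert b S)
  let ?C = "centralizer n G S"
  have sub: "centralizer n G (insert b S) \<subseteq> ?C" by (rule centralizer_antimono) blast
  have "a \<in> ?C" "c \<in> ?C" "x \<in> ?C" "y \<in> ?C"
    using insert.prems(3,4,5,7) sub by blast+
  moreover have "S \<subseteq> G" "\<forall>s\<in>S. \<forall>t\<in>S. \<not> anticomm n s t"
    using insert.prems(1,2) by blast+
  ultimately obtain g where g: "g \<in> ?C" "anticomm n g a" "anticomm n g c"
    using insert.IH insert.prems(6,8) by blast
  have b: "b \<in> ?C" using insert.prems(1,2) by (auto simp: centralizer_def)
  have "(a, c) \<in> (frustration_edges n (centralizer n ?C {b}))\<^sup>*"
    using centralizer_connected[OF pauli_closed_centralizer[OF closed] b] insert.prems(3-8) g
    unfolding centralizer_insert[symmetric] by blast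
  then show ?case
    using pauli_closed_common_neighbour[OF pauli_closed_centralizer[OF closed]] insert.prems(3-6)
    unfolding centralizer_insert[symmetric] by blast
qed

lemma pauli_cartan_pmul_KK:
  "pauli_cartan n K M \<Longrightarrow> x \<in> K \<Longrightarrow> y \<in> K \<Longrightarrow> anticomm n x y \<Longrightarrow> pmul x y \<in> K"
  unfolding pauli_cartan_def by blast

lemma pauli_cartan_pmul_MM:
  "pauli_cartan n K M \<Longrightarrow> x \<in> M \<Longrightarrow> y \<in> M \<Longrightarrow> anticomm n x y \<Longrightarrow> pmul x y \<in> K"
  unfolding pauli_cartan_def by blast

lemma pauli_cartan_pmul_KM:
  "pauli_cartan n K M \<Longrightarrow> x \<in> K \<Longrightarrow> y \<in> M \<Longrightarrow> anticomm n x y \<Longrightarrow> pmul x y \<in> M"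
  unfolding pauli_cartan_def by blast

lemma pauli_cartan_pmul_MK:
  "pauli_cartan n K M \<Longrightarrow> x \<in> M \<Longrightarrow> y \<in> K \<Longrightarrow> anticomm n x y \<Longrightarrow> pmul x y \<in> M"
  using pauli_cartan_pmul_KM[of n K M y x] pmul_commute anticomm_sym by metis

lemma pauli_cartan_closed: "pauli_cartan n K M \<Longrightarrow> pauli_closed n (K \<union> M)"
  unfolding pauli_closed_def
  using pauli_cartan_pmul_KK pauli_cartan_pmul_MM pauli_cartan_pmul_KM pauli_cartan_pmul_MK by blast

lemma pauli_cartan_finite_K: "pauli_cartan n K M \<Longrightarrow> finite K"
  unfolding pauli_cartan_def using finite_pauli_strings finite_subset by blast

lemma pauli_cartan_common_neighbour_in_K:
  assumes cartan: "pauli_cartan n K M"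
    and g: "g \<in> centralizer n (K \<union> M) S" "anticomm n g a" "anticomm n g c"
    and a: "a \<in> centralizer n M S" and ac: "\<not> anticomm n a c"
  shows "\<exists>q\<in>centralizer n K S. anticomm n q a \<and> anticomm n q c"
proof (cases "g \<in> K")
  case True
  then show ?thesis using g by (auto simp: centralizer_def)
next
  case False
  then have "g \<in> M" using g by (simp add: centralizer_def)
  then have "pmul g a \<in> K"
    using pauli_cartan_pmul_MM[OF cartan] a g by (simp add: centralizer_def)
  then have "pmul g a \<in> centralizer n K S"
    using a g by (simp add: centralizer_def anticomm_pmul)
  moreover have "anticomm n (pmul g a) a" "anticomm n (pmul g a) c"
    using g ac by (simp_all add: anticomm_pmul)
  ultimately show ?thesis by blast
qed

text \<open>The second branch of \<open>f\<close> passes through \<open>M\<close>; both branches preserve the commutation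
  with \<open>q\<close>, which makes \<open>f\<close> injective.\<close>
lemma card_centralizer_anticomm_swap_le:
  assumes cartan: "pauli_cartan n K M" and a: "a \<in> M" and c: "c \<in> M" and ac: "\<not> anticomm n a c"
    and q: "q \<in> centralizer n K S" "anticomm n q a" "anticomm n q c"
    and S: "\<forall>s\<in>S. \<not> anticomm n a s \<and> \<not> anticomm n c s"
  shows "card {k\<in>centralizer n K (insert c S). anticomm n k a}
    \<le> card {k\<in>centralizer n K (insert a S). anticomm n k c}"
    (is "card ?X \<le> card ?Y")
proof -
  define f where "f x = (if anticomm n x q then pmul x q else pmul (pmul (pmul x a) q) c)" for x
  have qK: "q \<in> K" and qS: "\<forall>s\<in>S. \<not> anticomm n q s" using q by (auto simp: centralizer_def)
  have f_in_K: "f x \<in> K" if x: "x \<in> ?X" for x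
  proof (cases "anticomm n x q")
    case True
    then show ?thesis
      using pauli_cartan_pmul_KK[OF cartan _ qK] x by (simp add: f_def centralizer_def)
  next
    case False
    have "pmul x a \<in> M"
      using pauli_cartan_pmul_KM[OF cartan _ a] x by (simp add: centralizer_def)
    moreover have "anticomm n (pmul x a) q" using False x q(2) anticomm_sym by (simp add: anticomm_pmul)
    ultimately have "pmul (pmul x a) q \<in> M" using pauli_cartan_pmul_MK[OF cartan _ qK] by blast
    moreover have "anticomm n (pmul (pmul x a) q) c"
      using False x q ac anticomm_sym by (simp add: anticomm_pmul centralizer_def)
    ultimately show ?thesis using pauli_cartan_pmul_MM[OF cartan _ c] False by (simp add: f_def)
  qed
  have f_anticomm: "anticomm n (f x) z \<longleftrightarrow> anticomm n x z \<noteq> anticomm n q z"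
    if "anticomm n x q" for x z
    using that by (simp add: f_def anticomm_pmul)
  have f_anticomm': "anticomm n (f x) z \<longleftrightarrow> anticomm n x z \<noteq> (anticomm n a z \<noteq> (anticomm n q z \<noteq> anticomm n c z))"
    if "\<not> anticomm n x q" for x z
    using that by (simp add: f_def anticomm_pmul) blast
  have "f x \<in> ?Y" if x: "x \<in> ?X" for x
    using f_in_K[OF x] x q S qS ac anticomm_sym f_anticomm f_anticomm'
    by (cases "anticomm n x q") (auto simp: centralizer_def)
  moreover have "inj_on f ?X"
  proof (rule inj_onI)
    fix x x' assume x: "x \<in> ?X" and x': "x' \<in> ?X" and eq: "f x = f x'"
    have "anticomm n (f x) q \<longleftrightarrow> anticomm n x q" for x
      using q ac anticomm_sym f_anticomm f_anticomm' by (cases "anticomm n x q") auto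
    then have "anticomm n x q \<longleftrightarrow> anticomm n x' q" using eq by metis
    then show "x = x'" using eq by (simp add: f_def split: if_splits) (metis pmul_pmul_cancel)+
  qed
  moreover have "finite ?Y" using pauli_cartan_finite_K[OF cartan] by (simp add: centralizer_def)
  ultimately show ?thesis by (meson card_inj_on_le image_subsetI)
qed

lemma card_centralizer_anticomm_swap:
  assumes cartan: "pauli_cartan n K M" and a: "a \<in> M" and c: "c \<in> M" and ac: "\<not> anticomm n a c"
    and q: "q \<in> centralizer n K S" "anticomm n q a" "anticomm n q c"
    and S: "\<forall>s\<in>S. \<not> anticomm n a s \<and> \<not> anticomm n c s"
  shows "card {k\<in>centralizer n K (insert c S). anticomm n k a}
    = card {k\<in>centralizer n K (insert a S). anticomm n k c}"
proof (rule antisym)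
  show "card {k\<in>centralizer n K (insert c S). anticomm n k a}
    \<le> card {k\<in>centralizer n K (insert a S). anticomm n k c}"
    using card_centralizer_anticomm_swap_le[OF cartan a c ac q S] .
  have "\<not> anticomm n c a" using ac anticomm_sym by blast
  then show "card {k\<in>centralizer n K (insert a S). anticomm n k c}
    \<le> card {k\<in>centralizer n K (insert c S). anticomm n k a}"
    using card_centralizer_anticomm_swap_le[OF cartan c a _ q(1,3,2)] S by blast
qed

lemma card_centralizer_anticomm_eq:
  assumes cartan: "pauli_cartan n K M" and a: "a \<in> M" and c: "c \<in> M" and ac: "\<not> anticomm n a c"
    and q: "q \<in> centralizer n K S" "anticomm n q a" "anticomm n q c"
    and S: "\<forall>s\<in>S. \<not> anticomm n a s \<and> \<not> anticomm n c s"
  shows "card {k\<in>centralizer n K S. anticomm n k a} = card {k\<in>centralizer n K S. anticomm n k c}"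
proof -
  have split: "card {k\<in>centralizer n K S. anticomm n k u}
      = card {k\<in>centralizer n K (insert v S). anticomm n k u}
        + card {k\<in>centralizer n K S. anticomm n k u \<and> anticomm n k v}" for u v
  proof -
    have "finite (centralizer n K T)" for T
      using pauli_cartan_finite_K[OF cartan] by (simp add: centralizer_def)
    then have "card ({k\<in>centralizer n K (insert v S). anticomm n k u}
          \<union> {k\<in>centralizer n K S. anticomm n k u \<and> anticomm n k v})
        = card {k\<in>centralizer n K (insert v S). anticomm n k u}
          + card {k\<in>centralizer n K S. anticomm n k u \<and> anticomm n k v}"
      by (intro card_Un_disjoint) (simp_all, auto simp: centralizer_def)
    moreover have "{k\<in>centralizer n K (insert v S). anticomm n k u}
          \<union> {k\<in>centralizer n K S. anticomm n k u \<and> anticomm n k v}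
        = {k\<in>centralizer n K S. anticomm n k u}"
      unfolding centralizer_def by blast
    ultimately show ?thesis by simp
  qed
  have "{k\<in>centralizer n K S. anticomm n k a \<and> anticomm n k c}
      = {k\<in>centralizer n K S. anticomm n k c \<and> anticomm n k a}"
    by blast
  then show ?thesis
    using split[of a c] split[of c a] card_centralizer_anticomm_swap[OF cartan a c ac q S]
    by simp
qed

lemma ksub_singleton: "ksub n K b {i} J = {k\<in>centralizer n K (b ` J). anticomm n k (b i)}"
  by (auto simp: ksub_def centralizer_def)

theorem corollaryC4:
  fixes n d r :: nat and K M :: "pstring set" and b :: "nat \<Rightarrow> pstring"
  assumes cartan: "pauli_cartan n K M"
    and b_in_M: "\<forall>i\<in>{1..d}. b i \<in> M"
    and b_comm: "\<forall>i\<in>{1..d}. \<forall>j\<in>{1..d}. \<not> anticomm n (b i) (b j)"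
    and b_conn: "\<forall>i\<in>{1..d}. \<forall>j\<in>{1..d}. (b i, b j) \<in> (frustration_edges n (K \<union> M))\<^sup>*"
    and r_ge: "2 \<le> r" and r_le: "r \<le> d"
    and ne1: "ksub n K b {r - 1} {1..r - 2} \<noteq> {}"
    and ne2: "ksub n K b {r} {1..r - 2} \<noteq> {}"
  shows "card (ksub n K b {r - 1} {1..r - 2}) = card (ksub n K b {r} {1..r - 2})
       \<and> card (ksub n K b {r - 1} ({1..r - 2} \<union> {r})) = card (ksub n K b {r} {1..r - 1})"
proof -
  define S a c where "S = b ` {1..r - 2}" and "a = b (r - 1)" and "c = b r"
  have idx: "r - 1 \<in> {1..d}" "r \<in> {1..d}" "{1..r - 2} \<subseteq> {1..d}" using r_ge r_le by auto
  have S: "finite S" "S \<subseteq> K \<union> M" "\<forall>s\<in>S. \<forall>t\<in>S. \<not> anticomm n s t"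
    using b_in_M b_comm idx by (auto simp: S_def)
  have a: "a \<in> centralizer n M S" and c: "c \<in> centralizer n M S" and ac: "\<not> anticomm n a c"
    using b_in_M b_comm idx by (auto simp: a_def c_def S_def centralizer_def)
  obtain x y where x: "x \<in> centralizer n K S" "anticomm n a x"
    and y: "y \<in> centralizer n K S" "anticomm n c y"
    using ne1 ne2 anticomm_sym unfolding ksub_singleton S_def a_def c_def by blast
  have KM: "centralizer n K S \<subseteq> centralizer n (K \<union> M) S" "centralizer n M S \<subseteq> centralizer n (K \<union> M) S"
    by (auto simp: centralizer_def)
  obtain g where "g \<in> centralizer n (K \<union> M) S" "anticomm n g a" "anticomm n g c"
    using centralizer_common_neighbour[OF pauli_cartan_closed[OF cartan], of a c S x y]
      b_conn idx S a c x y KM unfolding a_def c_def by blast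
  then obtain q where q: "q \<in> centralizer n K S" "anticomm n q a" "anticomm n q c"
    using pauli_cartan_common_neighbour_in_K[OF cartan _ _ _ a ac] by blast
  have aM: "a \<in> M" and cM: "c \<in> M" and ac_S: "\<forall>s\<in>S. \<not> anticomm n a s \<and> \<not> anticomm n c s"
    using a c by (auto simp: centralizer_def)
  have "{1..r - 1} = insert (r - 1) {1..r - 2}" using r_ge by auto
  then have "b ` ({1..r - 2} \<union> {r}) = insert c S" "b ` {1..r - 1} = insert a S"
    by (simp_all add: S_def a_def c_def)
  then show ?thesis
    using card_centralizer_anticomm_eq[OF cartan aM cM ac q ac_S]
      card_centralizer_anticomm_swap[OF cartan aM cM ac q ac_S]
    unfolding ksub_singleton S_def a_def c_def by simp
qed

end
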